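(* Let $(t_n)_{n\in\mathbb{N}}$ be a strictly increasing sequence in $\mathbb{R}$ and $(b_n)_{n\in\mathbb{N}}$ a sequence in $(1,\infty)$. Let $\mu=\sum_{n=1}^\infty\beta_n\delta_{t_n}$ with $\beta_n=\frac{\sqrt{b_n}+1}{\sqrt{b_n}-1}$. Then: (a) if $\inf_n(t_{n+1}-t_n)>0$ and $\inf_n b_n>1$, then $\mu$ is translation bounded, i.e. $\sup_{x\in\mathbb{R}}\mu([x,x+1])<\infty$; (b) $\mu$ is eventually periodic if and only if the sequence $\big((t_{n+1}-t_n,b_n)\big)_{n\in\mathbb{N}}$ is eventually periodic; (c) if the sets $\{t_{n+1}-t_n:n\in\mathbb{N}\}$ and $\{b_n:n\in\mathbb{N}\}$ are finite, then $\mu$ has the simple finite decomposition property.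
   Context: A piece is a pair $(\nu,I)$, written $\nu^I$, consisting of a left-closed right-open interval $I\subseteq\mathbb{R}$ of positive length $\lambda(I)$ and a translation bounded measure $\nu$ supported on $I$. It is finite if $\lambda(I)<\infty$. It occurs in a measure $\mu$ at $x$ if $1_{x+I}\mu$ is a translate of $\nu$. The concatenation $\nu^I=\nu_1^{I_1}\mid\nu_2^{I_2}\mid\cdots$ of finite pieces $(\nu_j^{I_j})_{j\in N}$, $N\subseteq\mathbb{N}$, is given by \[I=[\min I_1,\min I_1+\sum_{j}\lambda(I_j)),\qquad \nu=\nu_1+\sum_{j\ge2}\nu_j\big(\cdot-(\min I_1+\textstyle\sum_{k<j}\lambda(I_k)-\min I_j)\big).\] $\mu$ has the finite decomposition property if there exist a finite set $\mathcal{P}$ of finite pieces, each with $\min I=0$, and $x_0$ such that $(1_{[x_0,\infty)}\mu)^{[x_0,\infty)}$ is a translate of a concatenation $\nu_1^{I_1}\mid\nu_2^{I_2}\mid\cdots$ of elements of $\mathcal{P}$. $\mu$ has the simple finite decomposition property if it has such a decomposition and there is $\ell>0$ with the following property. Suppose two concatenations $A\mid\nu_1^{I_1}\mid\cdots\mid\nu_{m_1}^{I_{m_1}}$ and $A\mid\mu_1^{J_1}\mid\cdots\mid\mu_{m_2}^{J_{m_2}}$ of consecutive pieces of the decomposition (all in $\mathcal{P}$) occur in $\mu$, such that: - the common first part $A=\nu_{-m}^{I_{-m}}\mid\cdots\mid\nu_0^{I_0}$ has length $\ge\ell$; - the two tails both have length $\ge\ell$; - the two tails, starting at $0$, agree after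 multiplication by $1_{[0,\ell)}$. Then $\nu_1^{I_1}=\mu_1^{J_1}$. A measure $\mu$ is eventually periodic if there are $x_0$ and $p>0$ with $\mu(A+p)=\mu(A)$ for all Borel $A\subseteq[x_0,\infty)$. A sequence is eventually periodic if it is periodic from some index on. *)

theory Defs
  imports "HOL-Analysis.Analysis"
begin

text \<open>Measures on the real line are Isabelle measures with sigma algebra the Borel sets.\<close>

definition translation_bounded :: "real measure \<Rightarrow> bool" where
  "translation_bounded \<nu> \<longleftrightarrow> (SUP x. emeasure \<nu> {x..x+1}) < \<infinity>"

definition translate :: "real measure \<Rightarrow> real \<Rightarrow> real measure" where
  "translate \<nu> s = distr \<nu> borel (\<lambda>x. x + s)"

definition restr :: "real measure \<Rightarrow> real set \<Rightarrow> real measure" where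
  "restr \<nu> S = density \<nu> (indicator S)"

type_synonym piece = "real measure \<times> real set"

definition lcro_interval :: "real set \<Rightarrow> bool" where
  "lcro_interval I \<longleftrightarrow> (\<exists>a b. a < b \<and> I = {a..<b}) \<or> (\<exists>a. I = {a..})"

definition is_piece :: "piece \<Rightarrow> bool" where
  "is_piece q \<longleftrightarrow> lcro_interval (snd q) \<and> sets (fst q) = sets borel
     \<and> translation_bounded (fst q) \<and> emeasure (fst q) (UNIV - snd q) = 0"

definition finite_piece :: "piece \<Rightarrow> bool" where
  "finite_piece q \<longleftrightarrow> is_piece q \<and> emeasure lborel (snd q) < \<infinity>"

definition translate_piece :: "piece \<Rightarrow> real \<Rightarrow> piece" where
  "translate_piece q s = (translate (fst q) s, (\<lambda>x. x + s) ` snd q)"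

text \<open>Concatenation of the finite pieces p j, j \<in> N, where N is {..<n} or UNIV
  (index 0 plays the role of index 1 in the paper).\<close>
definition concat_pieces :: "(nat \<Rightarrow> piece) \<Rightarrow> nat set \<Rightarrow> piece" where
  "concat_pieces p N =
    (let a = Inf (snd (p 0));
         off = (\<lambda>j. a + (\<Sum>k<j. measure lborel (snd (p k))) - Inf (snd (p j)))
     in (measure_of UNIV (sets borel)
           (\<lambda>A. \<Sum>j. if j \<in> N then emeasure (translate (fst (p j)) (off j)) A else 0),
         {x. a \<le> x \<and> ennreal (x - a) < (\<Sum>j. if j \<in> N then emeasure lborel (snd (p j)) else 0)}))"

definition fdp_witness :: "real measure \<Rightarrow> piece set \<Rightarrow> (nat \<Rightarrow> piece) \<Rightarrow> real \<Rightarrow> bool" where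
  "fdp_witness \<mu> P p x0 \<longleftrightarrow> finite P
     \<and> (\<forall>q\<in>P. finite_piece q \<and> Inf (snd q) = 0)
     \<and> (\<forall>j. p j \<in> P)
     \<and> (\<exists>s. translate_piece (restr \<mu> {x0..}, {x0..}) s = concat_pieces p UNIV)"

definition finite_decomposition_property :: "real measure \<Rightarrow> bool" where
  "finite_decomposition_property \<mu> \<longleftrightarrow> (\<exists>P p x0. fdp_witness \<mu> P p x0)"

definition simple_finite_decomposition_property :: "real measure \<Rightarrow> bool" where
  "simple_finite_decomposition_property \<mu> \<longleftrightarrow>
    (\<exists>P p x0 L. fdp_witness \<mu> P p x0 \<and> L > 0 \<and>
      (\<forall>k k' m m1 m2.
         (\<forall>r\<le>m. p (k + r) = p (k' + r))
         \<and> emeasure lborel (snd (concat_pieces (\<lambda>r. p (k + r)) {..m})) \<ge> ennreal L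
         \<and> emeasure lborel (snd (concat_pieces (\<lambda>r. p (k + m + 1 + r)) {..<m1})) \<ge> ennreal L
         \<and> emeasure lborel (snd (concat_pieces (\<lambda>r. p (k' + m + 1 + r)) {..<m2})) \<ge> ennreal L
         \<and> restr (fst (concat_pieces (\<lambda>r. p (k + m + 1 + r)) {..<m1})) {0..<L}
           = restr (fst (concat_pieces (\<lambda>r. p (k' + m + 1 + r)) {..<m2})) {0..<L}
         \<longrightarrow> p (k + m + 1) = p (k' + m + 1)))"

definition eventually_periodic_measure :: "real measure \<Rightarrow> bool" where
  "eventually_periodic_measure \<mu> \<longleftrightarrow> (\<exists>x0 p. p > 0 \<and>
     (\<forall>A\<in>sets borel. A \<subseteq> {x0..} \<longrightarrow> emeasure \<mu> ((\<lambda>x. x + p) ` A) = emeasure \<mu> A))"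

definition eventually_periodic_seq :: "(nat \<Rightarrow> 'a) \<Rightarrow> bool" where
  "eventually_periodic_seq s \<longleftrightarrow> (\<exists>N p. p > 0 \<and> (\<forall>n\<ge>N. s (n + p) = s n))"

definition beta :: "real \<Rightarrow> real" where
  "beta x = (sqrt x + 1) / (sqrt x - 1)"

definition dirac_comb :: "(nat \<Rightarrow> real) \<Rightarrow> (nat \<Rightarrow> real) \<Rightarrow> real measure" where
  "dirac_comb t b = measure_of UNIV (sets borel)
     (\<lambda>A. \<Sum>n. ennreal (beta (b n)) * indicator A (t n))"

end

theory Submission
  imports Defs
begin

(*
  The measure is the sum of the point masses beta (b n) at t n. All these masses are positive, so
  the atoms of the measure are exactly the points t n, and beta is injective on (1, \<infinity>), so the
  masses recover b n. Hence invariance of the measure under translation by p beyond some point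
  amounts to an index shift t (n + P) = t n + p, b (n + P) = b n, which is part (b). For (a), a unit
  interval contains at most 1 + 1/\<delta> atoms, each of mass at most beta (inf b). For (c), the measure
  is the concatenation of the pieces "mass beta (b n) at 0, on [0, t (n + 1) - t n)"; a window
  longer than every gap sees the atom at its left end and the next atom, and these two determine
  the piece starting there.
*)

section \<open>Sums of point masses\<close>

definition point_masses :: "(nat \<Rightarrow> ennreal) \<Rightarrow> (nat \<Rightarrow> real) \<Rightarrow> real measure" where
  "point_masses w f = distr (density (count_space UNIV) w) borel f"

lemma sets_point_masses [simp, measurable_cong]: "sets (point_masses w f) = sets borel"
  by (simp add: point_masses_def)

lemma space_point_masses [simp]: "space (point_masses w f) = UNIV"
  by (simp add: point_masses_def)

lemma emeasure_point_masses:
  assumes "A \<in> sets borel"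
  shows "emeasure (point_masses w f) A = (\<Sum>n. w n * indicator A (f n))"
proof -
  have "emeasure (point_masses w f) A = emeasure (density (count_space UNIV) w) (f -` A)"
    unfolding point_masses_def using assms by (subst emeasure_distr) auto
  also have "\<dots> = (\<integral>\<^sup>+ n. w n * indicator (f -` A) n \<partial>count_space UNIV)"
    by (subst emeasure_density) auto
  also have "\<dots> = (\<Sum>n. w n * indicator A (f n))"
    by (subst nn_integral_count_space_nat) (simp add: indicator_def)
  finally show ?thesis .
qed

lemma measure_of_point_masses:
  "measure_of UNIV (sets borel) (\<lambda>A. \<Sum>n. w n * indicator A (f n)) = point_masses w f"
proof -
  have "measure_of UNIV (sets borel) (\<lambda>A. \<Sum>n. w n * indicator A (f n))
      = measure_of UNIV (sets borel) (emeasure (point_masses w f))"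
    by (rule measure_of_eq) (auto simp: emeasure_point_masses sets.sigma_sets_eq[of borel, simplified])
  then show ?thesis
    using measure_of_of_measure[of "point_masses w f"] by simp
qed

lemma dirac_comb_eq_point_masses: "dirac_comb t b = point_masses (\<lambda>n. ennreal (beta (b n))) t"
  unfolding dirac_comb_def by (rule measure_of_point_masses)

lemma emeasure_point_masses_singleton:
  assumes "inj f"
  shows "emeasure (point_masses w f) {f j} = w j"
proof -
  have "(\<Sum>n. w n * indicator {f j} (f n)) = (\<Sum>n\<in>{j}. w n * indicator {f j} (f n))"
    by (rule suminf_finite) (use assms in \<open>auto simp: inj_def indicator_def\<close>)
  then show ?thesis by (simp add: emeasure_point_masses)
qed

lemma emeasure_point_masses_singleton_eq_0:
  assumes "\<And>n. f n \<noteq> y"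
  shows "emeasure (point_masses w f) {y} = 0"
  using assms by (simp add: emeasure_point_masses)

lemma emeasure_point_masses_singleton_eq_0_iff:
  assumes "inj f" "\<And>n. w n \<noteq> 0"
  shows "emeasure (point_masses w f) {x} = 0 \<longleftrightarrow> x \<notin> range f"
  using assms emeasure_point_masses_singleton[of f w] emeasure_point_masses_singleton_eq_0[of f x w]
  by auto

lemma translate_point_masses: "translate (point_masses w f) s = point_masses w (\<lambda>n. f n + s)"
  unfolding translate_def point_masses_def
  by (subst distr_distr) (auto simp: comp_def)

lemma restr_point_masses:
  assumes "\<And>n. f n \<in> S" "S \<in> sets borel"
  shows "restr (point_masses w f) S = point_masses w f"
proof (rule measure_eqI)
  fix A assume "A \<in> sets (restr (point_masses w f) S)"
  then have A: "A \<in> sets borel" by (simp add: restr_def)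
  have "emeasure (restr (point_masses w f) S) A = emeasure (point_masses w f) (S \<inter> A)"
    unfolding restr_def by (rule emeasure_restricted) (use A assms in auto)
  also have "\<dots> = emeasure (point_masses w f) A"
    using A assms by (auto simp: emeasure_point_masses indicator_def intro!: suminf_cong)
  finally show "emeasure (restr (point_masses w f) S) A = emeasure (point_masses w f) A" .
qed (simp add: restr_def)

lemma emeasure_restr_singleton:
  assumes "sets M = sets borel" "S \<in> sets borel" "y \<in> S"
  shows "emeasure (restr M S) {y} = emeasure M {y}"
proof -
  have "emeasure (restr M S) {y} = emeasure M (S \<inter> {y})"
    unfolding restr_def by (rule emeasure_restricted) (auto simp: assms)
  then show ?thesis using assms(3) by (simp add: Int_absorb1)
qed

lemma beta_eq: "1 < x \<Longrightarrow> beta x = 1 + 2 / (sqrt x - 1)"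
  unfolding beta_def by (simp add: field_simps)

lemma beta_pos: "1 < x \<Longrightarrow> 0 < beta x"
  by (simp add: beta_eq add_pos_nonneg)

lemma beta_antimono: "1 < x \<Longrightarrow> x \<le> y \<Longrightarrow> beta y \<le> beta x"
  by (simp add: beta_eq divide_left_mono)

lemma beta_inj: "1 < x \<Longrightarrow> 1 < y \<Longrightarrow> beta x = beta y \<Longrightarrow> x = y"
  by (simp add: beta_eq)

section \<open>Translation boundedness\<close>

lemma mult_le_diff_of_gaps:
  fixes t :: "nat \<Rightarrow> real"
  assumes "\<And>n. d \<le> t (Suc n) - t n"
  shows "real k * d \<le> t (n + k) - t n"
proof (induction k)
  case (Suc k)
  then show ?case using assms[of "n + k"] by (simp add: algebra_simps)
qed simp

lemma translation_bounded_point_masses: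
  fixes t :: "nat \<Rightarrow> real"
  assumes gaps: "\<And>n. \<delta> \<le> t (Suc n) - t n" and "0 < \<delta>"
    and weights: "\<And>n. w n \<le> C" and "C < \<infinity>"
  shows "translation_bounded (point_masses w t)"
proof -
  define K where "K = nat \<lfloor>1 / \<delta>\<rfloor>"
  have window: "n \<le> m + K" if "t m \<in> {x..x+1}" "t n \<in> {x..x+1}" "m \<le> n" for x m n
  proof -
    have "real (n - m) * \<delta> \<le> t n - t m"
      using mult_le_diff_of_gaps[where t=t, OF gaps, of "n - m" m] \<open>m \<le> n\<close> by simp
    also have "\<dots> \<le> 1" using that by simp
    finally have "real (n - m) \<le> 1 / \<delta>" using \<open>0 < \<delta>\<close> by (simp add: field_simps)
    then show ?thesis unfolding K_def by linarith
  qed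
  have "emeasure (point_masses w t) {x..x+1} \<le> of_nat (Suc K) * C" for x
  proof -
    define m where "m = (LEAST n. t n \<in> {x..x+1})"
    have in_window: "n \<in> {m..m+K}" if "t n \<in> {x..x+1}" for n
    proof -
      have "t m \<in> {x..x+1}" "m \<le> n"
        unfolding m_def by (rule LeastI[where P="\<lambda>n. t n \<in> {x..x+1}", OF that],
          rule Least_le[where P="\<lambda>n. t n \<in> {x..x+1}", OF that])
      then show ?thesis using window[of m x n] that by simp
    qed
    have "emeasure (point_masses w t) {x..x+1} = (\<Sum>n. w n * indicator {x..x+1} (t n))"
      by (simp add: emeasure_point_masses)
    also have "\<dots> = (\<Sum>n\<in>{m..m+K}. w n * indicator {x..x+1} (t n))"
      by (rule suminf_finite) (use in_window in \<open>auto simp: indicator_def\<close>)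
    also have "\<dots> \<le> (\<Sum>n\<in>{m..m+K}. C)"
      by (rule sum_mono) (use weights in \<open>auto simp: indicator_def\<close>)
    finally show ?thesis by simp
  qed
  then have "(SUP x. emeasure (point_masses w t) {x..x+1}) \<le> of_nat (Suc K) * C"
    by (rule SUP_least)
  also have "\<dots> < \<infinity>"
    using \<open>C < \<infinity>\<close> by (simp add: ennreal_mult_less_top of_nat_less_top)
  finally show ?thesis unfolding translation_bounded_def .
qed

lemma translation_bounded_dirac_comb:
  fixes t b :: "nat \<Rightarrow> real"
  assumes "strict_mono t" "\<And>n. 1 < b n"
    and "0 < (INF n. t (Suc n) - t n)" "1 < (INF n. b n)"
  shows "translation_bounded (dirac_comb t b)"
proof -
  have "(INF n. t (Suc n) - t n) \<le> t (Suc n) - t n" for n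
    using assms(1) by (intro cINF_lower bdd_belowI[of _ 0]) (auto simp: strict_mono_def less_imp_le)
  moreover have "ennreal (beta (b n)) \<le> ennreal (beta (INF n. b n))" for n
    using assms(2,4) by (intro ennreal_leI beta_antimono cINF_lower bdd_belowI[of _ 1])
      (auto simp: less_imp_le)
  ultimately show ?thesis
    unfolding dirac_comb_eq_point_masses using assms(3)
    by (intro translation_bounded_point_masses) auto
qed

section \<open>Eventual periodicity\<close>

lemma shift_of_periodic_gaps:
  fixes t :: "nat \<Rightarrow> real"
  assumes "\<And>n. N \<le> n \<Longrightarrow> t (Suc (n + P)) - t (n + P) = t (Suc n) - t n" and "N \<le> n"
  shows "t (n + P) = t n + (t (N + P) - t N)"
proof -
  have "t (N + k + P) = t (N + k) + (t (N + P) - t N)" for k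
  proof (induction k)
    case (Suc k)
    have "t (N + Suc k + P) = t (N + k + P) + (t (Suc (N + k + P)) - t (N + k + P))" by simp
    also have "\<dots> = t (N + k + P) + (t (Suc (N + k)) - t (N + k))"
      using assms(1)[of "N + k"] by (simp add: add.commute add.left_commute)
    finally show ?case using Suc by simp
  qed simp
  from this[of "n - N"] show ?thesis using \<open>N \<le> n\<close> by simp
qed

lemma translation_invariant_point_masses:
  fixes t :: "nat \<Rightarrow> real"
  assumes mono: "strict_mono t"
    and shift: "\<And>n. N \<le> n \<Longrightarrow> t (n + P) = t n + p \<and> w (n + P) = w n"
    and A: "A \<in> sets borel" "A \<subseteq> {t N..}"
  shows "emeasure (point_masses w t) ((\<lambda>x. x + p) ` A) = emeasure (point_masses w t) A"
proof -
  have image_eq: "(\<lambda>x. x + p) ` A = (\<lambda>x. x - p) -` A"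
    by (auto simp: image_iff intro!: bexI[where x="_ - p"])
  have "(\<lambda>x::real. x - p) \<in> borel_measurable borel" by measurable
  from measurable_sets[OF this A(1)] have "(\<lambda>x. x - p) -` A \<in> sets borel" by simp
  then have "emeasure (point_masses w t) ((\<lambda>x. x + p) ` A) = (\<Sum>n. w n * indicator A (t n - p))"
    unfolding image_eq by (simp add: emeasure_point_masses indicator_def)
  also have "\<dots> = (\<Sum>n. w (n + (N + P)) * indicator A (t (n + (N + P)) - p))
      + (\<Sum>n<N + P. w n * indicator A (t n - p))"
    by (rule suminf_offset) simp
  also have "(\<Sum>n<N + P. w n * indicator A (t n - p)) = 0"
  proof (intro sum.neutral ballI)
    fix n assume "n \<in> {..<N + P}"
    then have "t n < t N + p" using shift[of N] strict_monoD[OF mono, of n "N + P"] by simp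
    then show "w n * indicator A (t n - p) = 0" using A(2) by (auto simp: indicator_def)
  qed
  also have "(\<lambda>n. w (n + (N + P)) * indicator A (t (n + (N + P)) - p))
      = (\<lambda>n. w (n + N) * indicator A (t (n + N)))"
    using shift by (simp add: add.assoc [symmetric])
  also have "(\<Sum>n<N. w n * indicator A (t n)) = 0"
  proof (intro sum.neutral ballI)
    fix n assume "n \<in> {..<N}"
    then have "t n < t N" using strict_monoD[OF mono] by simp
    then show "w n * indicator A (t n) = 0" using A(2) by (auto simp: indicator_def)
  qed
  then have "(\<Sum>n. w (n + N) * indicator A (t (n + N))) + 0 = emeasure (point_masses w t) A"
    using suminf_offset[of "\<lambda>n. w n * indicator A (t n)" N] A(1)
    by (simp add: emeasure_point_masses)
  finally show ?thesis by simp
qed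

lemma eventually_periodic_measure_dirac_comb:
  fixes t b :: "nat \<Rightarrow> real"
  assumes mono: "strict_mono t"
    and "eventually_periodic_seq (\<lambda>n. (t (Suc n) - t n, b n))"
  shows "eventually_periodic_measure (dirac_comb t b)"
proof -
  obtain N P where "0 < P"
    and per: "\<And>n. N \<le> n \<Longrightarrow> t (Suc (n + P)) - t (n + P) = t (Suc n) - t n \<and> b (n + P) = b n"
    using assms(2) unfolding eventually_periodic_seq_def by auto
  define p where "p = t (N + P) - t N"
  have shift: "t (n + P) = t n + p \<and> ennreal (beta (b (n + P))) = ennreal (beta (b n))"
    if "N \<le> n" for n
    using shift_of_periodic_gaps[of N t P n] per that by (simp add: p_def)
  have "0 < p" using strict_monoD[OF mono, of N "N + P"] \<open>0 < P\<close> by (simp add: p_def)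
  moreover have "\<forall>A\<in>sets borel. A \<subseteq> {t N..} \<longrightarrow>
      emeasure (point_masses (\<lambda>n. ennreal (beta (b n))) t) ((\<lambda>x. x + p) ` A)
      = emeasure (point_masses (\<lambda>n. ennreal (beta (b n))) t) A"
    using translation_invariant_point_masses[OF mono shift] by blast
  ultimately show ?thesis
    unfolding eventually_periodic_measure_def dirac_comb_eq_point_masses by blast
qed

lemma shift_of_translation_invariant_range:
  fixes t :: "nat \<Rightarrow> real"
  assumes mono: "strict_mono t"
    and forward: "\<And>n. N \<le> n \<Longrightarrow> t n + p \<in> range t"
    and backward: "\<And>x. t N \<le> x \<Longrightarrow> x + p \<in> range t \<Longrightarrow> x \<in> range t"
    and base: "t (N + P) = t N + p"
  shows "N \<le> n \<Longrightarrow> t (n + P) = t n + p"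
proof (induction n rule: dec_induct)
  case (step n)
  obtain m where m: "t m = t (Suc n) + p" using forward[of "Suc n"] step(1) by fastforce
  have "t (n + P) < t m" using step(3) m strict_monoD[OF mono, of n "Suc n"] by simp
  then have "n + P < m" using strict_mono_less[OF mono] by blast
  moreover have "\<not> Suc n + P < m"
  proof
    assume "Suc n + P < m"
    define x where "x = t (Suc n + P) - p"
    have "t n < x" using step(3) strict_monoD[OF mono, of "n + P" "Suc n + P"] by (simp add: x_def)
    have "x < t (Suc n)" using m strict_monoD[OF mono \<open>Suc n + P < m\<close>] by (simp add: x_def)
    have "t N \<le> t n" using step(1) strict_mono_less_eq[OF mono] by blast
    then obtain j where "t j = x"
      using backward[of x] \<open>t n < x\<close> by (force simp: x_def)
    then show False
      using \<open>t n < x\<close> \<open>x < t (Suc n)\<close> strict_mono_less[OF mono] by (metis less_Suc_eq_le not_le)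
  qed
  ultimately have "m = Suc n + P" by simp
  then show ?case using m by simp
qed (rule base)

lemma eventually_periodic_seq_of_dirac_comb:
  fixes t b :: "nat \<Rightarrow> real"
  assumes mono: "strict_mono t" and b_gt_1: "\<And>n. 1 < b n"
    and "filterlim t at_top sequentially"
    and "eventually_periodic_measure (dirac_comb t b)"
  shows "eventually_periodic_seq (\<lambda>n. (t (Suc n) - t n, b n))"
proof -
  define w where "w n = ennreal (beta (b n))" for n
  define \<mu> where "\<mu> = point_masses w t"
  have \<mu>_eq: "dirac_comb t b = \<mu>"
    unfolding \<mu>_def w_def by (rule dirac_comb_eq_point_masses)
  have inj: "inj t" using mono by (rule strict_mono_imp_inj_on)
  have atom: "emeasure \<mu> {t n} = w n" for n
    unfolding \<mu>_def using emeasure_point_masses_singleton[OF inj] .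
  have "w n \<noteq> 0" for n using beta_pos[OF b_gt_1, of n] by (simp add: w_def)
  then have atom_iff: "emeasure \<mu> {x} \<noteq> 0 \<longleftrightarrow> x \<in> range t" for x
    unfolding \<mu>_def using emeasure_point_masses_singleton_eq_0_iff[OF inj] by blast
  obtain x0 p where "0 < p"
    and invariant: "\<And>A. A \<in> sets borel \<Longrightarrow> A \<subseteq> {x0..} \<Longrightarrow> emeasure \<mu> ((\<lambda>x. x + p) ` A) = emeasure \<mu> A"
    using assms(4) unfolding eventually_periodic_measure_def \<mu>_eq by blast
  have per: "emeasure \<mu> {x + p} = emeasure \<mu> {x}" if "x0 \<le> x" for x
    using invariant[of "{x}"] that by simp
  have "eventually (\<lambda>n. x0 \<le> t n) sequentially"
    using assms(3) by (simp add: filterlim_at_top)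
  then obtain N where N: "\<And>n. N \<le> n \<Longrightarrow> x0 \<le> t n"
    unfolding eventually_sequentially by blast
  have range_shift: "x + p \<in> range t \<longleftrightarrow> x \<in> range t" if "t N \<le> x" for x
  proof -
    have "x0 \<le> x" using N[of N] that by simp
    then show ?thesis using atom_iff[of "x + p"] atom_iff[of x] per by simp
  qed
  obtain m where m: "t m = t N + p" using range_shift[of "t N"] by auto
  have "N < m" using m \<open>0 < p\<close> strict_mono_less[OF mono, of N m] by simp
  define P where "P = m - N"
  have t_shift: "t (n + P) = t n + p" if "N \<le> n" for n
  proof (rule shift_of_translation_invariant_range[OF mono _ _ _ that])
    show "t n + p \<in> range t" if "N \<le> n" for n
      using range_shift[of "t n"] that strict_mono_less_eq[OF mono] by auto
    show "t (N + P) = t N + p" using m \<open>N < m\<close> by (simp add: P_def)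
  qed (use range_shift in blast)
  have b_shift: "b (n + P) = b n" if "N \<le> n" for n
  proof -
    have "w (n + P) = w n"
      using atom[of "n + P"] atom[of n] per[of "t n"] t_shift[OF that] N[OF that] by simp
    then show ?thesis
      using beta_pos[OF b_gt_1] beta_inj[OF b_gt_1 b_gt_1] by (simp add: w_def less_imp_le)
  qed
  have "0 < P" using \<open>N < m\<close> by (simp add: P_def)
  moreover have "(t (Suc (n + P)) - t (n + P), b (n + P)) = (t (Suc n) - t n, b n)" if "N \<le> n" for n
    using t_shift[of n] t_shift[of "Suc n"] b_shift[of n] that by simp
  ultimately show ?thesis unfolding eventually_periodic_seq_def by blast
qed

section \<open>Decomposition into one-atom pieces\<close>

definition atom_piece :: "real \<Rightarrow> real \<Rightarrow> piece" where
  "atom_piece \<beta> g = (point_masses (\<lambda>j. if j = 0 then ennreal \<beta> else 0) (\<lambda>_. 0), {0..<g})"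

definition atom_pieces :: "(nat \<Rightarrow> real) \<Rightarrow> (nat \<Rightarrow> real) \<Rightarrow> nat \<Rightarrow> piece" where
  "atom_pieces t \<beta> n = atom_piece (\<beta> n) (t (Suc n) - t n)"

lemma emeasure_point_masses_single:
  assumes "A \<in> sets borel"
  shows "emeasure (point_masses (\<lambda>j. if j = 0 then c else 0) (\<lambda>_. s)) A = c * indicator A s"
proof -
  have "(\<Sum>j. (if j = 0 then c else 0) * indicator A s) = (\<Sum>j\<in>{0::nat}. (if j = 0 then c else 0) * indicator A s)"
    by (rule suminf_finite) auto
  then show ?thesis using assms by (simp add: emeasure_point_masses)
qed

lemma finite_piece_atom_piece:
  assumes "0 < g"
  shows "finite_piece (atom_piece \<beta> g)"
proof -
  have "emeasure (fst (atom_piece \<beta> g)) {x..x+1} \<le> ennreal \<beta>" for x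
    by (simp add: atom_piece_def emeasure_point_masses_single indicator_def)
  then have "(SUP x. emeasure (fst (atom_piece \<beta> g)) {x..x+1}) \<le> ennreal \<beta>"
    by (rule SUP_least)
  then have "translation_bounded (fst (atom_piece \<beta> g))"
    unfolding translation_bounded_def using le_less_trans by fastforce
  moreover have "lcro_interval {0..<g}" unfolding lcro_interval_def using assms by blast
  ultimately show ?thesis
    using assms by (simp add: finite_piece_def is_piece_def atom_piece_def emeasure_point_masses_single)
qed

lemma concat_atom_pieces:
  fixes \<beta> g :: "nat \<Rightarrow> real"
  assumes "\<And>j. 0 < g j"
  shows "fst (concat_pieces (\<lambda>j. atom_piece (\<beta> j) (g j)) N)
           = point_masses (\<lambda>j. if j \<in> N then ennreal (\<beta> j) else 0) (\<lambda>j. \<Sum>k<j. g k)"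
    and "snd (concat_pieces (\<lambda>j. atom_piece (\<beta> j) (g j)) N)
           = {x. 0 \<le> x \<and> ennreal x < (\<Sum>j. if j \<in> N then ennreal (g j) else 0)}"
proof -
  have Inf_eq: "Inf (snd (atom_piece (\<beta> j) (g j))) = 0" for j
    using assms[of j] by (simp add: atom_piece_def)
  have length_eq: "measure lborel (snd (atom_piece (\<beta> j) (g j))) = g j"
    and emeasure_length_eq: "emeasure lborel (snd (atom_piece (\<beta> j) (g j))) = ennreal (g j)" for j
    using assms[of j] by (simp_all add: atom_piece_def)
  show "snd (concat_pieces (\<lambda>j. atom_piece (\<beta> j) (g j)) N)
           = {x. 0 \<le> x \<and> ennreal x < (\<Sum>j. if j \<in> N then ennreal (g j) else 0)}"
    unfolding concat_pieces_def Let_def snd_conv Inf_eq emeasure_length_eq by simp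
  have "fst (concat_pieces (\<lambda>j. atom_piece (\<beta> j) (g j)) N) = measure_of UNIV (sets borel)
      (\<lambda>A. \<Sum>j. (if j \<in> N then ennreal (\<beta> j) else 0) * indicator A (\<Sum>k<j. g k))"
    unfolding concat_pieces_def Let_def fst_conv Inf_eq length_eq
  proof (intro measure_of_eq suminf_cong)
    fix A :: "real set" and j assume "A \<in> sigma_sets UNIV (sets borel)"
    then have "A \<in> sets borel" by (metis sets.sigma_sets_eq space_borel)
    then show "(if j \<in> N then emeasure (translate (fst (atom_piece (\<beta> j) (g j))) (0 + (\<Sum>k<j. g k) - 0)) A else 0)
        = (if j \<in> N then ennreal (\<beta> j) else 0) * indicator A (\<Sum>k<j. g k)"
      by (simp add: atom_piece_def translate_point_masses emeasure_point_masses_single)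
  qed simp
  then show "fst (concat_pieces (\<lambda>j. atom_piece (\<beta> j) (g j)) N)
           = point_masses (\<lambda>j. if j \<in> N then ennreal (\<beta> j) else 0) (\<lambda>j. \<Sum>k<j. g k)"
    by (simp add: measure_of_point_masses)
qed

lemma sum_gaps_telescope: "(\<Sum>k<j. t (Suc (K + k)) - t (K + k)) = t (K + j) - (t K :: real)"
  using sum_lessThan_telescope[of "\<lambda>i. t (K + i)" j] by simp

lemma fst_concat_atom_pieces:
  fixes t \<beta> :: "nat \<Rightarrow> real"
  assumes "strict_mono t"
  shows "fst (concat_pieces (\<lambda>r. atom_pieces t \<beta> (K + r)) N)
           = point_masses (\<lambda>j. if j \<in> N then ennreal (\<beta> (K + j)) else 0) (\<lambda>j. t (K + j) - t K)"
  using concat_atom_pieces(1)[of "\<lambda>j. t (Suc (K + j)) - t (K + j)" "\<lambda>j. \<beta> (K + j)" N]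
    strict_monoD[OF assms] by (simp add: atom_pieces_def sum_gaps_telescope)

lemma snd_concat_atom_pieces_lessThan:
  fixes t \<beta> :: "nat \<Rightarrow> real"
  assumes "strict_mono t"
  shows "snd (concat_pieces (\<lambda>r. atom_pieces t \<beta> (K + r)) {..<n}) = {0..<t (K + n) - t K}"
proof -
  have gaps: "0 < t (Suc (K + j)) - t (K + j)" for j using strict_monoD[OF assms] by simp
  have "(\<Sum>j. if j \<in> {..<n} then ennreal (t (Suc (K + j)) - t (K + j)) else 0)
      = (\<Sum>j<n. ennreal (t (Suc (K + j)) - t (K + j)))"
    by (subst suminf_finite[of "{..<n}"]) auto
  also have "\<dots> = ennreal (t (K + n) - t K)"
    using gaps by (simp add: sum_ennreal less_imp_le sum_gaps_telescope)
  finally show ?thesis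
    using concat_atom_pieces(2)[of "\<lambda>j. t (Suc (K + j)) - t (K + j)" "\<lambda>j. \<beta> (K + j)" "{..<n}"] gaps
      strict_mono_less_eq[OF assms, of K "K + n"]
    by (auto simp: atom_pieces_def ennreal_less_iff)
qed

lemma suminf_ennreal_gaps_eq_top:
  fixes t :: "nat \<Rightarrow> real"
  assumes gaps: "\<And>n. d \<le> t (Suc n) - t n" and "0 < d"
  shows "(\<Sum>j. ennreal (t (Suc j) - t j)) = \<infinity>"
proof (rule ccontr)
  assume "(\<Sum>j. ennreal (t (Suc j) - t j)) \<noteq> \<infinity>"
  then obtain r where r: "(\<Sum>j. ennreal (t (Suc j) - t j)) = ennreal r" "0 \<le> r"
    by (cases "\<Sum>j. ennreal (t (Suc j) - t j)" rule: ennreal_cases) auto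
  define n where "n = nat \<lceil>(r + 1) / d\<rceil>"
  have "r + 1 \<le> real n * d"
    using \<open>0 < d\<close> by (simp add: n_def pos_divide_le_eq[symmetric]) linarith
  also have "\<dots> \<le> t n - t 0" using mult_le_diff_of_gaps[where t=t, OF gaps, of n 0] by simp
  finally have "r + 1 \<le> t n - t 0" .
  have "0 \<le> t (Suc j) - t j" for j using gaps[of j] \<open>0 < d\<close> by linarith
  then have "ennreal (t n - t 0) = (\<Sum>j<n. ennreal (t (Suc j) - t j))"
    using sum_ennreal[of "{..<n}" "\<lambda>j. t (Suc j) - t j"] sum_gaps_telescope[of t 0 n] by simp
  also have "\<dots> \<le> ennreal r" unfolding r(1)[symmetric] by (rule sum_le_suminf) auto
  finally show False using \<open>r + 1 \<le> t n - t 0\<close> r(2) by simp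
qed

lemma fdp_witness_atom_pieces:
  fixes t \<beta> :: "nat \<Rightarrow> real"
  assumes mono: "strict_mono t"
    and "finite (range \<beta>)" and finite_gaps: "finite (range (\<lambda>n. t (Suc n) - t n))"
  shows "fdp_witness (point_masses (\<lambda>n. ennreal (\<beta> n)) t)
           (case_prod atom_piece ` (range \<beta> \<times> range (\<lambda>n. t (Suc n) - t n))) (atom_pieces t \<beta>) (t 0)"
proof -
  have gaps_pos: "0 < t (Suc n) - t n" for n using strict_monoD[OF mono] by simp
  define d where "d = Min (range (\<lambda>n. t (Suc n) - t n))"
  have "d \<le> t (Suc n) - t n" for n unfolding d_def using finite_gaps by simp
  moreover have "0 < d" unfolding d_def using finite_gaps gaps_pos by simp
  ultimately have "(\<Sum>j. ennreal (t (Suc j) - t j)) = \<infinity>"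
    by (rule suminf_ennreal_gaps_eq_top)
  then have "snd (concat_pieces (atom_pieces t \<beta>) UNIV) = {0..}"
    using concat_atom_pieces(2)[of "\<lambda>j. t (Suc j) - t j" \<beta> UNIV] gaps_pos
    by (auto simp: atom_pieces_def[abs_def])
  moreover have "fst (concat_pieces (atom_pieces t \<beta>) UNIV) = point_masses (\<lambda>n. ennreal (\<beta> n)) (\<lambda>n. t n - t 0)"
    using fst_concat_atom_pieces[OF mono, of \<beta> 0 UNIV] by simp
  moreover have "translate (restr (point_masses (\<lambda>n. ennreal (\<beta> n)) t) {t 0..}) (- t 0)
      = point_masses (\<lambda>n. ennreal (\<beta> n)) (\<lambda>n. t n - t 0)"
    using strict_mono_less_eq[OF mono, of 0] by (simp add: restr_point_masses translate_point_masses)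
  moreover have "(\<lambda>x. x + - t 0) ` {t 0..} = {0..}"
    by (auto simp: image_iff intro!: bexI[where x="_ + t 0"])
  ultimately have "translate_piece (restr (point_masses (\<lambda>n. ennreal (\<beta> n)) t) {t 0..}, {t 0..}) (- t 0)
      = concat_pieces (atom_pieces t \<beta>) UNIV"
    by (simp add: translate_piece_def prod_eq_iff)
  moreover have "finite_piece q \<and> Inf (snd q) = 0"
    if "q \<in> case_prod atom_piece ` (range \<beta> \<times> range (\<lambda>n. t (Suc n) - t n))" for q
    using that gaps_pos finite_piece_atom_piece by (auto simp: atom_piece_def)
  ultimately show ?thesis
    unfolding fdp_witness_def using assms(2,3) by (auto simp: atom_pieces_def)
qed

lemma emeasure_window_atoms:
  fixes f :: "nat \<Rightarrow> real" and v :: "nat \<Rightarrow> ennreal"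
  assumes mono: "strict_mono f" and "f 0 = 0" "1 < n" "f 1 < L"
  defines "M \<equiv> restr (point_masses (\<lambda>j. if j \<in> {..<n} then v j else 0) f) {0..<L}"
  shows "emeasure M {0} = v 0"
    and "emeasure M {f 1} = v 1"
    and "0 < y \<Longrightarrow> y < f 1 \<Longrightarrow> emeasure M {y} = 0"
proof -
  have "0 < f 1" using strict_monoD[OF mono, of 0 1] \<open>f 0 = 0\<close> by simp
  note atom = emeasure_point_masses_singleton[OF strict_mono_imp_inj_on[OF mono]]
  show "emeasure M {0} = v 0"
    using emeasure_restr_singleton[of _ "{0..<L}" 0] atom[of _ 0] assms \<open>0 < f 1\<close>
    by (simp add: M_def)
  show "emeasure M {f 1} = v 1"
    using emeasure_restr_singleton[of _ "{0..<L}" "f 1"] atom[of _ 1] assms \<open>0 < f 1\<close>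
    by (simp add: M_def)
  assume y: "0 < y" "y < f 1"
  have "f j \<noteq> y" for j
    using y \<open>f 0 = 0\<close> strict_mono_less_eq[OF mono, of 1 j] by (cases j) auto
  then show "emeasure M {y} = 0"
    using emeasure_restr_singleton[of _ "{0..<L}" y] emeasure_point_masses_singleton_eq_0 y assms
    by (simp add: M_def)
qed

lemma window_determines_first_atoms:
  fixes f f' :: "nat \<Rightarrow> real"
  assumes "strict_mono f" "f 0 = 0" "1 < n" "f 1 < L" "v 1 \<noteq> 0"
    and "strict_mono f'" "f' 0 = 0" "1 < n'" "f' 1 < L" "v' 1 \<noteq> 0"
    and eq: "restr (point_masses (\<lambda>j. if j \<in> {..<n} then v j else 0) f) {0..<L}
           = restr (point_masses (\<lambda>j. if j \<in> {..<n'} then v' j else 0) f') {0..<L}"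
  shows "v 0 = v' 0 \<and> f 1 = f' 1"
proof -
  note window = emeasure_window_atoms[OF assms(1-4), where v=v] and
    window' = emeasure_window_atoms[OF assms(6-9), where v=v']
  have "0 < f 1" "0 < f' 1"
    using strict_monoD[OF assms(1), of 0 1] strict_monoD[OF assms(6), of 0 1] assms(2,7) by simp_all
  have "v 0 = v' 0" using window(1) window'(1) eq by simp
  moreover have "\<not> f 1 < f' 1"
  proof
    assume "f 1 < f' 1"
    then show False using window(2) window'(3)[of "f 1"] \<open>0 < f 1\<close> eq assms(5) by simp
  qed
  moreover have "\<not> f' 1 < f 1"
  proof
    assume "f' 1 < f 1"
    then show False using window'(2) window(3)[of "f' 1"] \<open>0 < f' 1\<close> eq assms(10) by simp
  qed
  ultimately show ?thesis by simp
qed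

lemma long_concat_atom_pieces_has_two_pieces:
  fixes t \<beta> :: "nat \<Rightarrow> real"
  assumes mono: "strict_mono t" and "\<And>K. t (Suc K) - t K < L"
    and "ennreal L \<le> emeasure lborel (snd (concat_pieces (\<lambda>r. atom_pieces t \<beta> (K + r)) {..<n}))"
  shows "1 < n"
proof (rule ccontr)
  assume "\<not> 1 < n"
  then have "t (K + n) - t K \<le> t (Suc K) - t K"
    using strict_mono_less_eq[OF mono, of "K + n" "Suc K"] by simp
  moreover have "t K \<le> t (K + n)" using strict_mono_less_eq[OF mono] by simp
  ultimately show False
    using assms(2)[of K] assms(3) snd_concat_atom_pieces_lessThan[OF mono, of \<beta> K n] by simp
qed

lemma atom_pieces_eq_of_windows_eq:
  fixes t \<beta> :: "nat \<Rightarrow> real"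
  assumes mono: "strict_mono t" and "\<And>j. 0 < \<beta> j" and "\<And>K. t (Suc K) - t K < L"
    and "1 < n" "1 < n'"
    and "restr (fst (concat_pieces (\<lambda>r. atom_pieces t \<beta> (K + r)) {..<n})) {0..<L}
       = restr (fst (concat_pieces (\<lambda>r. atom_pieces t \<beta> (K' + r)) {..<n'})) {0..<L}"
  shows "atom_pieces t \<beta> K = atom_pieces t \<beta> K'"
proof -
  have "strict_mono (\<lambda>j. t (K + j) - t K)" for K
    using mono by (simp add: strict_mono_def)
  moreover have "ennreal (\<beta> j) \<noteq> 0" for j using assms(2)[of j] by simp
  ultimately have "ennreal (\<beta> K) = ennreal (\<beta> K') \<and> t (Suc K) - t K = t (Suc K') - t K'"
    using window_determines_first_atoms[of "\<lambda>j. t (K + j) - t K" n L "\<lambda>j. ennreal (\<beta> (K + j))"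
        "\<lambda>j. t (K' + j) - t K'" n' "\<lambda>j. ennreal (\<beta> (K' + j))"]
      assms(3-6) fst_concat_atom_pieces[OF mono] by simp
  then show ?thesis
    using assms(2)[of K] assms(2)[of K'] by (simp add: atom_pieces_def)
qed

lemma simple_finite_decomposition_property_dirac_comb:
  fixes t b :: "nat \<Rightarrow> real"
  assumes mono: "strict_mono t" and b_gt_1: "\<And>n. 1 < b n"
    and finite_gaps: "finite (range (\<lambda>n. t (Suc n) - t n))" and "finite (range b)"
  shows "simple_finite_decomposition_property (dirac_comb t b)"
proof -
  define \<beta> where "\<beta> n = beta (b n)" for n
  define p where "p = atom_pieces t \<beta>"
  define L where "L = Max (range (\<lambda>n. t (Suc n) - t n)) + 1"
  have "range \<beta> = beta ` range b" by (auto simp: \<beta>_def)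
  then have "finite (range \<beta>)" using assms(4) by simp
  have "dirac_comb t b = point_masses (\<lambda>n. ennreal (\<beta> n)) t"
    unfolding \<beta>_def by (rule dirac_comb_eq_point_masses)
  then have witness: "fdp_witness (dirac_comb t b)
      (case_prod atom_piece ` (range \<beta> \<times> range (\<lambda>n. t (Suc n) - t n))) p (t 0)"
    unfolding p_def using fdp_witness_atom_pieces[OF mono \<open>finite (range \<beta>)\<close> finite_gaps] by simp
  have gap_less_L: "t (Suc K) - t K < L" for K
  proof -
    have "t (Suc K) - t K \<le> Max (range (\<lambda>n. t (Suc n) - t n))"
      using finite_gaps by (intro Max_ge) auto
    then show ?thesis by (simp add: L_def)
  qed
  have "0 < L" using gap_less_L[of 0] strict_monoD[OF mono, of 0 1] by simp
  have \<beta>_pos: "0 < \<beta> n" for n unfolding \<beta>_def using b_gt_1 by (rule beta_pos)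
  note long = long_concat_atom_pieces_has_two_pieces[where \<beta>=\<beta>, OF mono gap_less_L]
  note next_piece = atom_pieces_eq_of_windows_eq[where \<beta>=\<beta>, OF mono \<beta>_pos gap_less_L long long]
  have "\<forall>k k' m m1 m2.
         (\<forall>r\<le>m. p (k + r) = p (k' + r))
         \<and> emeasure lborel (snd (concat_pieces (\<lambda>r. p (k + r)) {..m})) \<ge> ennreal L
         \<and> emeasure lborel (snd (concat_pieces (\<lambda>r. p (k + m + 1 + r)) {..<m1})) \<ge> ennreal L
         \<and> emeasure lborel (snd (concat_pieces (\<lambda>r. p (k' + m + 1 + r)) {..<m2})) \<ge> ennreal L
         \<and> restr (fst (concat_pieces (\<lambda>r. p (k + m + 1 + r)) {..<m1})) {0..<L}
           = restr (fst (concat_pieces (\<lambda>r. p (k' + m + 1 + r)) {..<m2})) {0..<L}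
         \<longrightarrow> p (k + m + 1) = p (k' + m + 1)"
    unfolding p_def using next_piece by blast
  then show ?thesis
    unfolding simple_finite_decomposition_property_def using witness \<open>0 < L\<close> by blast
qed

theorem lemma4p3:
  fixes t b :: "nat \<Rightarrow> real"
  assumes "strict_mono t"
    and "\<forall>n. b n > 1"
  shows "((INF n. t (Suc n) - t n) > 0 \<and> (INF n. b n) > 1
            \<longrightarrow> translation_bounded (dirac_comb t b))
       \<and> (eventually_periodic_seq (\<lambda>n. (t (Suc n) - t n, b n))
            \<longrightarrow> eventually_periodic_measure (dirac_comb t b))
       \<and> (filterlim t at_top sequentially
            \<longrightarrow> eventually_periodic_measure (dirac_comb t b)
            \<longrightarrow> eventually_periodic_seq (\<lambda>n. (t (Suc n) - t n, b n)))
       \<and> (finite (range (\<lambda>n. t (Suc n) - t n)) \<and> finite (range b)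
            \<longrightarrow> simple_finite_decomposition_property (dirac_comb t b))"
  using translation_bounded_dirac_comb[OF assms(1)]
    eventually_periodic_measure_dirac_comb[OF assms(1)]
    eventually_periodic_seq_of_dirac_comb[OF assms(1)]
    simple_finite_decomposition_property_dirac_comb[OF assms(1)]
    assms(2)
  by blast

end
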